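(* In $\mathbb R^2$ with coordinates $(a,b)$, let $T=1$, $U=[-1,1]$, $f\equiv0$, $v_u(a,b)=(u,-au)$, $\ell(a,b)=b$, and $\vartheta=\delta_0\otimes\eta$ with $\eta$ a probability measure on $\mathbb R$ with finite first moment. Let $I[u]=\int\ell\,d\mu_1[u]$. Then: (i) the constant control $\bar u\equiv0$ satisfies the maximum condition of the Pontryagin Maximum Principle, with dual state $\bar p_t(a,b)=-b$, and $I[\bar u]=\int b\,d\eta(b)$; (ii) the constant control $u\equiv1$ gives $\mu_t=[(a,b)\mapsto(a+t,\,b-at-t^2/2)]_\sharp\vartheta$ and $I[u]=\int b\,d\eta(b)-\tfrac12<I[\bar u]$, and $u\equiv1$ is a global minimizer of $I$ over $\mathcal U=L_\infty([0,1];[-1,1])$; (iii) every constant control $u\equiv c$ with $c\in[-1,1]\setminus\{0\}$ satisfies $I[u]<I[\bar u]$, so $\bar u$ is not optimal.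
   Context: For $u\in\mathcal U$, $\mu[u]$ is the distributional solution of $\partial_t\mu_t+\nabla\cdot(v_{u(t)}\mu_t)=0$, $\mu_0=\vartheta$, i.e. the push-forward of $\vartheta$ by the flow of $\dot a=u(t)$, $\dot b=-a\,u(t)$. The maximum condition for $\bar u$ means: for a.e. $t$, $\bar u(t)\in\arg\max_{w\in U}\int\nabla\bar p_t\cdot v_w\,d\bar\mu_t$, where $\bar p$ solves $\partial_t\bar p+\nabla\bar p\cdot v_{\bar u(t)}=0$, $\bar p_1=-\ell$. $\otimes$ denotes product measure and $\sharp$ push-forward. *)

theory Defs
  imports "HOL-Probability.Probability"
begin

definition Uset :: "real set" where
  "Uset = {-1..1}"

definition vfield :: "real \<Rightarrow> real \<times> real \<Rightarrow> real \<times> real" where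
  "vfield w x = (w, - fst x * w)"

definition ell :: "real \<times> real \<Rightarrow> real" where
  "ell x = snd x"

definition Ucontrols :: "(real \<Rightarrow> real) set" where
  "Ucontrols = {u. u \<in> borel_measurable (lebesgue_on {0..1}) \<and>
                    (AE t in lebesgue_on {0..1}. u t \<in> Uset)}"

text \<open>Flow of the (triangular) Caratheodory ODE  a' = u(t), b' = - a u(t), written in
  integral form: a(t) = a0 + int_0^t u, b(t) = b0 - int_0^t a(s) u(s) ds.\<close>
definition flow :: "(real \<Rightarrow> real) \<Rightarrow> real \<Rightarrow> real \<times> real \<Rightarrow> real \<times> real" where
  "flow u t x =
     (fst x + integral {0..t} u,
      snd x - integral {0..t} (\<lambda>s. (fst x + integral {0..s} u) * u s))"

definition theta :: "real measure \<Rightarrow> (real \<times> real) measure" where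
  "theta \<eta> = return borel 0 \<Otimes>\<^sub>M \<eta>"

definition mu :: "real measure \<Rightarrow> (real \<Rightarrow> real) \<Rightarrow> real \<Rightarrow> (real \<times> real) measure" where
  "mu \<eta> u t = distr (theta \<eta>) borel (flow u t)"

definition cost :: "real measure \<Rightarrow> (real \<Rightarrow> real) \<Rightarrow> real" where
  "cost \<eta> u = (\<integral>x. ell x \<partial>(mu \<eta> u 1))"

text \<open>p solves the transport equation  dp/dt + grad p . v_{u(t)} = 0  on [0,1] x R^2
  (classically: the space-time derivative applied to (1, v_{u(t)}(x)) vanishes).\<close>
definition transport_sol :: "(real \<Rightarrow> real) \<Rightarrow> (real \<Rightarrow> real \<times> real \<Rightarrow> real) \<Rightarrow> bool" where
  "transport_sol u p \<longleftrightarrow>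
     (\<forall>t\<in>{0..1}. \<forall>x. \<exists>D. ((\<lambda>(s,y). p s y) has_derivative D) (at (t,x)) \<and>
                          D (1, vfield (u t) x) = 0)"

definition max_condition :: "real measure \<Rightarrow> (real \<Rightarrow> real) \<Rightarrow> (real \<Rightarrow> real \<times> real \<Rightarrow> real) \<Rightarrow> bool" where
  "max_condition \<eta> ubar p \<longleftrightarrow>
     (AE t in lebesgue_on {0..1}.
        ubar t \<in> Uset \<and>
        (\<forall>w\<in>Uset. (\<integral>x. frechet_derivative (p t) (at x) (vfield w x) \<partial>(mu \<eta> ubar t))
                  \<le> (\<integral>x. frechet_derivative (p t) (at x) (vfield (ubar t) x) \<partial>(mu \<eta> ubar t))))"

end

theory Submission
  imports Defs
begin

text \<open>Starting from \<open>\<delta>\<^sub>0 \<otimes> \<eta>\<close>, the flow of a control \<open>u\<close> moves \<open>(0, b)\<close> at time 1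
  to \<open>(C, b - K)\<close> with \<open>K = \<integral>\<^sub>0\<^sup>1 A(s) u(s) ds\<close> and \<open>A(s) = \<integral>\<^sub>0\<^sup>s u\<close>, so that
  \<open>I[u] = \<integral> b d\<eta> - K\<close>. Since \<open>|A(s) u(s)| \<le> s\<close>, always \<open>K \<le> 1/2\<close>, and a constant
  control \<open>c\<close> gives \<open>K = c\<^sup>2/2\<close>; hence \<open>u \<equiv> 1\<close> is optimal and \<open>u \<equiv> 0\<close> is not.
  The zero control nevertheless satisfies the maximum condition, because \<open>\<mu>\<^sub>t[0] = \<vartheta>\<close>
  is concentrated on \<open>{a = 0}\<close>, where \<open>\<nabla>p\<^sub>t \<cdot> v\<^sub>w = a w\<close> vanishes for every \<open>w\<close>.\<close>

lemma measurable_Pair_zero: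
  assumes "sets \<eta> = sets borel"
  shows "(\<lambda>b::real. (0::real, b)) \<in> \<eta> \<rightarrow>\<^sub>M borel"
proof -
  have "(\<lambda>b::real. (0::real, b)) \<in> borel \<rightarrow>\<^sub>M borel"
    by (intro borel_measurable_continuous_onI continuous_intros)
  then show ?thesis
    using measurable_cong_sets[OF assms refl, of "borel :: (real \<times> real) measure"] by simp
qed

lemma theta_eq_distr:
  assumes P: "prob_space \<eta>" and S: "sets \<eta> = sets borel"
  shows "theta \<eta> = distr \<eta> borel (\<lambda>b. (0::real, b))"
  unfolding theta_def
proof (rule pair_measure_eqI)
  show "sigma_finite_measure (return borel (0::real))"
    by (simp add: prob_space_imp_sigma_finite prob_space_return)
  show "sigma_finite_measure \<eta>"
    by (simp add: P prob_space_imp_sigma_finite)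
  have "sets (return borel (0::real) \<Otimes>\<^sub>M \<eta>) = sets ((borel::real measure) \<Otimes>\<^sub>M (borel::real measure))"
    by (rule sets_pair_measure_cong) (simp_all add: S)
  also have "\<dots> = sets (borel :: (real \<times> real) measure)"
    by (simp only: borel_prod)
  finally show "sets (return borel (0::real) \<Otimes>\<^sub>M \<eta>) = sets (distr \<eta> borel (\<lambda>b. (0::real, b)))"
    by simp
  fix A B assume A: "A \<in> sets (return borel (0::real))" and B: "B \<in> sets \<eta>"
  have "A \<times> B \<in> sets (borel :: (real \<times> real) measure)"
    using A B S by (simp add: borel_prod[symmetric])
  then have "emeasure (distr \<eta> borel (\<lambda>b. (0::real, b))) (A \<times> B)
      = emeasure \<eta> ((\<lambda>b. (0::real, b)) -` (A \<times> B) \<inter> space \<eta>)"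
    by (rule emeasure_distr[OF measurable_Pair_zero[OF S]])
  also have "(\<lambda>b. (0::real, b)) -` (A \<times> B) \<inter> space \<eta> = (if 0 \<in> A then B else {})"
    using sets_eq_imp_space_eq[OF S] by auto
  finally show "emeasure (return borel 0) A * emeasure \<eta> B
      = emeasure (distr \<eta> borel (\<lambda>b. (0::real, b))) (A \<times> B)"
    using A by (simp add: emeasure_return)
qed

lemma cost_eq_if_flow_shear:
  assumes P: "prob_space \<eta>" and S: "sets \<eta> = sets borel" and I: "integrable \<eta> (\<lambda>b. b)"
    and F: "flow u 1 = (\<lambda>x. (fst x + C, snd x - (fst x * C + K)))"
  shows "cost \<eta> u = (\<integral>b. b \<partial>\<eta>) - K"
proof -
  interpret prob_space \<eta> by fact
  have m0: "(\<lambda>b. (0::real, b)) \<in> \<eta> \<rightarrow>\<^sub>M borel"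
    by (rule measurable_Pair_zero[OF S])
  have m1: "flow u 1 \<in> borel \<rightarrow>\<^sub>M borel" unfolding F
    by (intro borel_measurable_continuous_onI continuous_intros)
  have "cost \<eta> u = (\<integral>x. snd x \<partial>(distr \<eta> borel (\<lambda>b. flow u 1 (0, b))))"
    unfolding cost_def mu_def theta_eq_distr[OF P S] ell_def
    by (simp add: distr_distr[OF m1 m0] comp_def)
  also have "\<dots> = (\<integral>b. snd (flow u 1 (0, b)) \<partial>\<eta>)"
    using integral_distr[OF measurable_comp[OF m0 m1], of snd]
    by (simp add: comp_def borel_prod[symmetric])
  also have "\<dots> = (\<integral>b. b - K \<partial>\<eta>)" by (simp add: F)
  also have "\<dots> = (\<integral>b. b \<partial>\<eta>) - K" using I by (simp add: prob_space)
  finally show ?thesis .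
qed

lemma flow_cong_negligible:
  assumes N: "negligible N" and uv: "\<And>s. s \<in> {0..1} - N \<Longrightarrow> u s = v s" and t: "t \<le> 1"
  shows "flow u t = flow v t"
proof -
  have uv': "u s = v s" if "s \<in> {0..t} - N" for s
    using that t uv by auto
  have primitive: "integral {0..s} u = integral {0..s} v" if "s \<le> t" for s
    by (rule integral_spike[OF N]) (use that uv' in auto)
  have "integral {0..t} (\<lambda>s. (a + integral {0..s} u) * u s)
      = integral {0..t} (\<lambda>s. (a + integral {0..s} v) * v s)" for a
    by (rule integral_spike[OF N]) (use uv' primitive in auto)
  then show ?thesis
    using primitive[OF order_refl] by (simp add: flow_def fun_eq_iff)
qed

lemma flow_clip_control:
  assumes "u \<in> Ucontrols"
  shows "flow u 1 = flow (\<lambda>s. max (-1) (min 1 (u s))) 1"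
proof -
  obtain N where N: "{x\<in>space (lebesgue_on {0..1}). u x \<notin> Uset} \<subseteq> N"
      "emeasure (lebesgue_on {0..1}) N = 0" "N \<in> sets (lebesgue_on {0..1})"
    using assms by (auto simp: Ucontrols_def elim: AE_E)
  then have "N \<in> null_sets (lebesgue_on {0..1})"
    by (simp add: null_sets_def)
  then have "N \<in> null_sets lebesgue"
    by (simp add: null_sets_restrict_space)
  then have "negligible N" by (simp add: negligible_iff_null_sets)
  then show ?thesis
    by (rule flow_cong_negligible) (use N(1) in \<open>auto simp: Uset_def\<close>)
qed

lemma has_integral_affine:
  fixes t p q :: real assumes "t \<ge> 0"
  shows "((\<lambda>s. p + q * s) has_integral (p * t + q * t^2/2)) {0..t}"
proof -
  have "((\<lambda>s. p + q * s) has_integral ((\<lambda>s. p * s + q * s^2/2) t - (\<lambda>s. p * s + q * s^2/2) 0)) {0..t}"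
    by (rule fundamental_theorem_of_calculus[OF assms])
      (auto intro!: derivative_eq_intros simp: has_real_derivative_iff_has_vector_derivative[symmetric])
  then show ?thesis by simp
qed

lemma bounded_control_integrable:
  fixes v :: "real \<Rightarrow> real"
  assumes v: "v \<in> borel_measurable (lebesgue_on {0..1})"
    and b: "\<And>s. s \<in> {0..1} \<Longrightarrow> \<bar>v s\<bar> \<le> 1"
  shows "v integrable_on {0..1}"
  by (rule measurable_bounded_by_integrable_imp_integrable_real[OF v _ b]) auto

lemma primitive_times_control_bound:
  fixes v :: "real \<Rightarrow> real"
  assumes v: "v \<in> borel_measurable (lebesgue_on {0..1})"
    and b: "\<And>s. s \<in> {0..1} \<Longrightarrow> \<bar>v s\<bar> \<le> 1"
  shows "(\<lambda>s. integral {0..s} v * v s) integrable_on {0..1}"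
    and "integral {0..1} (\<lambda>s. integral {0..s} v * v s) \<le> 1/2"
proof -
  have vi: "v integrable_on {0..1}" by (rule bounded_control_integrable[OF v b])
  define A where "A s = integral {0..s} v" for s
  have "A \<in> borel_measurable (lebesgue_on {0..1})"
    unfolding A_def
    by (rule continuous_imp_measurable_on_sets_lebesgue[OF indefinite_integral_continuous_1[OF vi]]) simp
  then have Avm: "(\<lambda>s. A s * v s) \<in> borel_measurable (lebesgue_on {0..1})"
    using v by (rule borel_measurable_times)
  have Avb: "\<bar>A s * v s\<bar> \<le> s" if s: "s \<in> {0..1}" for s
  proof -
    have "\<bar>A s\<bar> \<le> integral {0..s} (\<lambda>_. 1::real)"
      unfolding A_def real_norm_def[symmetric]
      by (rule integral_norm_bound_integral)
        (use integrable_subinterval_real[OF vi, of 0 s] s b in auto)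
    then have "\<bar>A s\<bar> \<le> s" using s by simp
    then show ?thesis
      using mult_mono[of "\<bar>A s\<bar>" s "\<bar>v s\<bar>" 1] b[OF s] by (simp add: abs_mult)
  qed
  have id: "((\<lambda>s. s) has_integral 1/2) {0..1::real}"
    using has_integral_affine[of 1 0 1] by simp
  then have Avi: "(\<lambda>s. A s * v s) integrable_on {0..1}"
    using measurable_bounded_by_integrable_imp_integrable_real[OF Avm, of "\<lambda>s. s"] Avb
    by (auto intro: has_integral_integrable)
  then show "(\<lambda>s. integral {0..s} v * v s) integrable_on {0..1}"
    by (simp add: A_def)
  have "norm (integral {0..1} (\<lambda>s. A s * v s)) \<le> integral {0..1} (\<lambda>s. s::real)"
    using Avi Avb id by (intro integral_norm_bound_integral) (auto intro: has_integral_integrable)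
  then show "integral {0..1} (\<lambda>s. integral {0..s} v * v s) \<le> 1/2"
    using integral_unique[OF id] by (simp add: A_def)
qed

lemma flow_one_shear:
  assumes v: "v \<in> borel_measurable (lebesgue_on {0..1})"
    and b: "\<And>s. s \<in> {0..1} \<Longrightarrow> \<bar>v s\<bar> \<le> 1"
  obtains C K where "K \<le> 1/2" and "flow v 1 = (\<lambda>x. (fst x + C, snd x - (fst x * C + K)))"
proof
  let ?K = "integral {0..1} (\<lambda>s. integral {0..s} v * v s)"
  have vi: "v integrable_on {0..1}" by (rule bounded_control_integrable[OF v b])
  have "integral {0..1} (\<lambda>s. (a + integral {0..s} v) * v s) = a * integral {0..1} v + ?K" for a
    using integral_add[OF integrable_on_mult_right[OF vi] primitive_times_control_bound(1)[OF v b]]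
    by (simp add: distrib_right)
  then show "flow v 1 = (\<lambda>x. (fst x + integral {0..1} v, snd x - (fst x * integral {0..1} v + ?K)))"
    by (simp add: flow_def fun_eq_iff)
qed (rule primitive_times_control_bound(2)[OF v b])

lemma flow_const:
  fixes c t :: real assumes t: "t \<ge> 0"
  shows "flow (\<lambda>_. c) t = (\<lambda>x. (fst x + c * t, snd x - (fst x * c * t + c * c * t^2 / 2)))"
proof -
  have primitive: "integral {0..s} (\<lambda>_. c) = c * s" if "s \<ge> 0" for s
    using that by simp
  have "integral {0..t} (\<lambda>s. (a + integral {0..s} (\<lambda>_. c)) * c)
      = integral {0..t} (\<lambda>s. a * c + (c * c) * s)" for a
    by (rule integral_cong) (simp add: primitive algebra_simps)
  also have "\<dots> a = a * c * t + c * c * t^2 / 2" for a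
    using has_integral_affine[OF t, of "a * c" "c * c"] by (simp add: integral_unique)
  finally show ?thesis
    using primitive[OF t] by (simp add: flow_def fun_eq_iff)
qed

lemma const_in_Ucontrols: "c \<in> Uset \<Longrightarrow> (\<lambda>_. c) \<in> Ucontrols"
  unfolding Ucontrols_def by auto

lemma mu_const_one:
  assumes "t \<ge> 0"
  shows "mu \<eta> (\<lambda>_. 1) t = distr (theta \<eta>) borel (\<lambda>(a,b). (a + t, b - a * t - t\<^sup>2 / 2))"
proof -
  have "flow (\<lambda>_. 1) t = (\<lambda>(a,b). (a + t, b - a * t - t\<^sup>2 / 2))"
    using flow_const[OF assms, of 1] by (auto simp: fun_eq_iff)
  then show ?thesis by (simp add: mu_def)
qed

lemma cost_const:
  assumes "prob_space \<eta>" "sets \<eta> = sets borel" "integrable \<eta> (\<lambda>b. b)"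
  shows "cost \<eta> (\<lambda>_. c) = (\<integral>b. b \<partial>\<eta>) - c * c / 2"
  by (rule cost_eq_if_flow_shear[OF assms, of _ c]) (simp add: flow_const)

lemma cost_const_less_mean:
  assumes "prob_space \<eta>" "sets \<eta> = sets borel" "integrable \<eta> (\<lambda>b. b)" and "c \<noteq> 0"
  shows "cost \<eta> (\<lambda>_. c) < (\<integral>b. b \<partial>\<eta>)"
proof -
  have "0 < c * c" using \<open>c \<noteq> 0\<close> not_real_square_gt_zero by blast
  then show ?thesis using cost_const[OF assms(1-3)] by simp
qed

lemma cost_lower_bound:
  assumes "prob_space \<eta>" "sets \<eta> = sets borel" "integrable \<eta> (\<lambda>b. b)"
    and u: "u \<in> Ucontrols"
  shows "(\<integral>b. b \<partial>\<eta>) - 1/2 \<le> cost \<eta> u"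
proof -
  let ?v = "\<lambda>s. max (-1) (min 1 (u s))"
  have "?v \<in> borel_measurable (lebesgue_on {0..1})"
    using u by (auto simp: Ucontrols_def intro!: borel_measurable_max borel_measurable_min)
  then obtain C K where "K \<le> 1/2" and "flow ?v 1 = (\<lambda>x. (fst x + C, snd x - (fst x * C + K)))"
    by (rule flow_one_shear) auto
  then show ?thesis
    using cost_eq_if_flow_shear[OF assms(1-3)] flow_clip_control[OF u] by fastforce
qed

lemma transport_sol_zero_control:
  "transport_sol (\<lambda>_. 0) (\<lambda>t x. - snd x)"
  unfolding transport_sol_def
proof (intro ballI allI exI conjI)
  fix t :: real and x :: "real \<times> real"
  have "bounded_linear (\<lambda>z::real \<times> real \<times> real. - snd (snd z))"
    by (intro bounded_linear_minus bounded_linear_compose[OF bounded_linear_snd bounded_linear_snd])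
  then show "((\<lambda>(s, y). - snd y) has_derivative (\<lambda>z::real \<times> real \<times> real. - snd (snd z))) (at (t, x))"
    by (simp add: case_prod_beta' bounded_linear_imp_has_derivative)
  show "- snd (snd (1::real, vfield 0 x)) = 0" by (simp add: vfield_def)
qed

lemma max_condition_zero_control:
  assumes P: "prob_space \<eta>" and S: "sets \<eta> = sets borel"
  shows "max_condition \<eta> (\<lambda>_. 0) (\<lambda>t x. - snd x)"
proof -
  have "frechet_derivative (\<lambda>x::real \<times> real. - snd x) (at x) = (\<lambda>h. - snd h)" for x
    by (simp add: frechet_derivative_at[symmetric] bounded_linear_imp_has_derivative
        bounded_linear_minus[OF bounded_linear_snd])
  moreover have "mu \<eta> (\<lambda>_. 0) t = distr \<eta> borel (\<lambda>b. (0::real, b))" if "t \<ge> 0" for t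
    using flow_const[OF that, of 0] by (simp add: mu_def theta_eq_distr[OF P S] distr_id2)
  moreover have "(\<integral>x. - snd (vfield w x) \<partial>(distr \<eta> borel (\<lambda>b. (0::real, b)))) = 0" for w
  proof -
    have "(\<lambda>x::real \<times> real. - snd (vfield w x)) = (\<lambda>x. fst x * w)"
      by (simp add: vfield_def fun_eq_iff)
    moreover have "(\<lambda>x::real \<times> real. fst x * w) \<in> borel_measurable borel"
      by (intro borel_measurable_continuous_onI continuous_intros)
    ultimately show ?thesis
      by (simp only: integral_distr[OF measurable_Pair_zero[OF S]]) simp
  qed
  ultimately show ?thesis
    unfolding max_condition_def by (intro AE_I2) (simp add: Uset_def)
qed

theorem mainTheorem4:
  fixes \<eta> :: "real measure"
  assumes "prob_space \<eta>"
    and "sets \<eta> = sets borel"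
    and "integrable \<eta> (\<lambda>b. b)"
  defines "ubar \<equiv> (\<lambda>t::real. 0::real)"
    and "pbar \<equiv> (\<lambda>(t::real) (x::real \<times> real). - snd x)"
  shows
    \<comment> \<open>(i)\<close>
    "(ubar \<in> Ucontrols \<and> transport_sol ubar pbar \<and> pbar 1 = (\<lambda>x. - ell x) \<and>
      max_condition \<eta> ubar pbar \<and> cost \<eta> ubar = (\<integral>b. b \<partial>\<eta>))
     \<comment> \<open>(ii)\<close>
     \<and> ((\<lambda>t. 1) \<in> Ucontrols \<and>
        (\<forall>t\<in>{0..1}. mu \<eta> (\<lambda>t. 1) t =
            distr (theta \<eta>) borel (\<lambda>(a,b). (a + t, b - a * t - t\<^sup>2 / 2))) \<and>
        cost \<eta> (\<lambda>t. 1) = (\<integral>b. b \<partial>\<eta>) - 1/2 \<and>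
        cost \<eta> (\<lambda>t. 1) < cost \<eta> ubar \<and>
        (\<forall>u\<in>Ucontrols. cost \<eta> (\<lambda>t. 1) \<le> cost \<eta> u))
     \<comment> \<open>(iii)\<close>
     \<and> (\<forall>c\<in>Uset - {0}. (\<lambda>t. c) \<in> Ucontrols \<and> cost \<eta> (\<lambda>t. c) < cost \<eta> ubar)
     \<and> \<not> (\<forall>u\<in>Ucontrols. cost \<eta> ubar \<le> cost \<eta> u)"
proof -
  note cost_const = cost_const[OF assms(1-3)] and cost_less = cost_const_less_mean[OF assms(1-3)]
  have cost_ubar: "cost \<eta> ubar = (\<integral>b. b \<partial>\<eta>)"
    using cost_const[of 0] by (simp add: ubar_def)
  have U_ubar: "ubar \<in> Ucontrols" and U_one: "(\<lambda>t. 1) \<in> Ucontrols"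
    unfolding ubar_def by (rule const_in_Ucontrols, simp add: Uset_def)+
  have transport: "transport_sol ubar pbar" and maximum: "max_condition \<eta> ubar pbar"
    unfolding ubar_def pbar_def
    by (rule transport_sol_zero_control, rule max_condition_zero_control[OF assms(1,2)])
  have terminal: "pbar 1 = (\<lambda>x. - ell x)"
    by (simp add: pbar_def ell_def fun_eq_iff)
  have cost_one: "cost \<eta> (\<lambda>t. 1) = (\<integral>b. b \<partial>\<eta>) - 1/2"
    using cost_const[of 1] by simp
  have one_better: "cost \<eta> (\<lambda>t. 1) < cost \<eta> ubar"
    using cost_less[of 1] cost_ubar by simp
  have one_optimal: "\<forall>u\<in>Ucontrols. cost \<eta> (\<lambda>t. 1) \<le> cost \<eta> u"
    using cost_lower_bound[OF assms(1-3)] cost_one by simp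
  have const_better: "\<forall>c\<in>Uset - {0}. (\<lambda>t. c) \<in> Ucontrols \<and> cost \<eta> (\<lambda>t. c) < cost \<eta> ubar"
    using const_in_Ucontrols cost_less cost_ubar by auto
  have "\<not> (\<forall>u\<in>Ucontrols. cost \<eta> ubar \<le> cost \<eta> u)"
    using U_one one_better by fastforce
  then show ?thesis
    using U_ubar transport terminal maximum cost_ubar U_one mu_const_one cost_one one_better
      one_optimal const_better by simp
qed

end
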